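(* Let $n,k\in \mathbb{N}$ with $k \geq 2$ and $\Sigma=\{1,\dots,k\}$. Then (a) if $n$ is even, $|L^{\mathrm{even}}_{n,k}| \geq k^n \cdot 2^{1-k}$; (b) if $n \geq k \ln k$, then $|L^{q}_{n,k}| \leq k^n \cdot 2^{2-k}$ for every $q \in \{0,1\}^k$.
   Context: For $q=(q_1,\dots,q_k)\in\{0,1\}^k$, $L^{q}_{n,k}=\{w\in\Sigma^n : |w|_j\equiv q_j \pmod 2 \text{ for all } j\in\Sigma\}$, where $|w|_j$ is the number of occurrences of letter $j$ in $w$; $L^{\mathrm{even}}_{n,k}=L^{\vec 0}_{n,k}$ is the set of words in $\Sigma^n$ in which every letter occurs an even number of times. *)

theory Defs
  imports Complex_Main
begin

definition words :: "nat \<Rightarrow> nat \<Rightarrow> nat list set" where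
  "words n k = {w. length w = n \<and> set w \<subseteq> {1..k}}"

definition occ :: "nat list \<Rightarrow> nat \<Rightarrow> nat" where
  "occ w j = count_list w j"

definition Lq :: "nat \<Rightarrow> nat \<Rightarrow> (nat \<Rightarrow> nat) \<Rightarrow> nat list set" where
  "Lq n k q = {w \<in> words n k. \<forall>j\<in>{1..k}. occ w j mod 2 = q j mod 2}"

definition Leven :: "nat \<Rightarrow> nat \<Rightarrow> nat list set" where
  "Leven n k = Lq n k (\<lambda>_. 0)"

end

theory Submission
  imports Defs
begin

text \<open>Count by characters of the parity group: for \<open>S \<subseteq> \<Sigma>\<close> put
  \<open>\<chi> S q = (-1)^(\<Sum>i\<in>S. q i)\<close>. Appending a letter \<open>x\<close> to a word toggles \<open>q x\<close>
  and so multiplies \<open>\<chi> S\<close> by \<open>-1\<close> or \<open>1\<close> according to \<open>x \<in> S\<close>; summing over the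
  \<open>k\<close> letters produces the factor \<open>k - 2|S|\<close>, whence
  \<open>2^k |L^q| = (\<Sum>S. \<chi> S q (k - 2|S|)^n)\<close>.
  For \<open>q = 0\<close> and even \<open>n\<close> all terms are non-negative and \<open>S = {}\<close>, \<open>S = \<Sigma>\<close> alone
  give \<open>2 k^n\<close>. For the upper bound, the \<open>k choose j\<close> terms with \<open>|S| = j\<close> and
  \<open>m = min j (k - j)\<close> contribute at most \<open>k^m (1 - 2m/k)^n k^n \<le> k^m exp(-2mn/k) k^n\<close>,
  which is \<open>\<le> k^n / k^m \<le> k^n (2^-j + 2^-(k-j))\<close> once \<open>n \<ge> k ln k\<close>; these sum to
  at most \<open>4 k^n\<close>.\<close>

definition character :: "nat set \<Rightarrow> (nat \<Rightarrow> nat) \<Rightarrow> real" where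
  "character S q = (\<Prod>i\<in>S. (-1) ^ q i)"

lemma finite_words: "finite (words n k)"
proof -
  have "words n k = {xs. set xs \<subseteq> {1..k} \<and> length xs = n}"
    by (auto simp: words_def)
  then show ?thesis
    using finite_lists_length_eq[of "{1..k}" n] by simp
qed

lemma words_Suc: "words (Suc n) k = (\<Union>x\<in>{1..k}. (#) x ` words n k)"
  by (auto simp: words_def length_Suc_conv)

lemma Lq_0: "Lq 0 k q = (if \<forall>j\<in>{1..k}. even (q j) then {[]} else {})"
  by (auto simp: Lq_def words_def occ_def even_iff_mod_2_eq_zero)

lemma Cons_in_Lq_iff:
  assumes "x \<in> {1..k}"
  shows "x # w \<in> Lq (Suc n) k q \<longleftrightarrow> w \<in> Lq n k (q(x := Suc (q x)))"
proof -
  have "occ (x # w) j mod 2 = q j mod 2 \<longleftrightarrow> occ w j mod 2 = (q(x := Suc (q x))) j mod 2" for j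
    by (cases "j = x") (auto simp: occ_def mod2_eq_if)
  then show ?thesis
    using assms by (simp add: Lq_def words_def)
qed

lemma Lq_Suc: "Lq (Suc n) k q = (\<Union>x\<in>{1..k}. (#) x ` Lq n k (q(x := Suc (q x))))"
proof (rule set_eqI)
  fix w
  show "w \<in> Lq (Suc n) k q \<longleftrightarrow> w \<in> (\<Union>x\<in>{1..k}. (#) x ` Lq n k (q(x := Suc (q x))))"
  proof (cases w)
    case Nil
    then show ?thesis
      by (auto simp: Lq_def words_def simp del: fun_upd_apply)
  next
    case (Cons x v)
    have "x # v \<in> Lq (Suc n) k q \<Longrightarrow> x \<in> {1..k}"
      by (simp add: Lq_def words_def)
    then have "x # v \<in> Lq (Suc n) k q \<longleftrightarrow> x \<in> {1..k} \<and> v \<in> Lq n k (q(x := Suc (q x)))"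
      using Cons_in_Lq_iff[of x k v n q] by blast
    moreover have "x # v \<in> (\<Union>y\<in>{1..k}. (#) y ` Lq n k (q(y := Suc (q y))))
        \<longleftrightarrow> x \<in> {1..k} \<and> v \<in> Lq n k (q(x := Suc (q x)))"
      by (auto simp del: fun_upd_apply)
    ultimately show ?thesis
      unfolding Cons by (simp only:)
  qed
qed

lemma card_Lq_Suc: "card (Lq (Suc n) k q) = (\<Sum>x\<in>{1..k}. card (Lq n k (q(x := Suc (q x)))))"
proof -
  have "finite (Lq n k q')" for q'
    using finite_words by (simp add: Lq_def)
  then show ?thesis
    unfolding Lq_Suc by (subst card_UN_disjoint) (auto simp: card_image)
qed

lemma abs_character: "\<bar>character S q\<bar> = 1"
  by (simp add: character_def abs_prod)

lemma character_toggle: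
  assumes "finite S"
  shows "character S (q(x := Suc (q x))) = (if x \<in> S then - character S q else character S q)"
proof -
  have "character S (q(x := Suc (q x))) = (\<Prod>i\<in>S. (-1) ^ q i * (if i = x then -1 else 1))"
    unfolding character_def by (intro prod.cong) auto
  also have "\<dots> = character S q * (if x \<in> S then -1 else 1)"
    using assms by (simp add: prod.distrib character_def)
  finally show ?thesis
    by simp
qed

lemma sum_character:
  assumes "finite A"
  shows "(\<Sum>S\<in>Pow A. character S q) = (if \<forall>j\<in>A. even (q j) then 2 ^ card A else 0)"
proof -
  have "(\<Sum>S\<in>Pow A. character S q) = (\<Prod>i\<in>A. (-1) ^ q i + 1)"
    using prod_add[OF assms, of "\<lambda>i. (-1::real) ^ q i" "\<lambda>_. 1"] by (simp add: character_def)
  also have "\<dots> = (\<Prod>i\<in>A. if even (q i) then 2 else 0)"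
    by (intro prod.cong) auto
  also have "\<dots> = (if \<forall>j\<in>A. even (q j) then 2 ^ card A else 0)"
    using assms by auto
  finally show ?thesis .
qed

lemma sum_sign_indicator:
  assumes "finite A" "S \<subseteq> A"
  shows "(\<Sum>x\<in>A. if x \<in> S then -1 else 1 :: real) = real (card A) - 2 * real (card S)"
proof -
  have "(\<Sum>x\<in>A. if x \<in> S then -1 else 1 :: real) = real (card (A - S)) - real (card S)"
    using assms by (simp add: sum.If_cases Int_absorb1 Diff_eq)
  then show ?thesis
    using assms by (simp add: card_Diff_subset card_mono finite_subset)
qed

lemma card_Lq_character_sum:
  "2 ^ k * real (card (Lq n k q))
     = (\<Sum>S\<in>Pow {1..k}. character S q * (real k - 2 * real (card S)) ^ n)"
proof (induction n arbitrary: q)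
  case 0
  show ?case
    using sum_character[of "{1..k}" q] by (simp add: Lq_0)
next
  case (Suc n)
  have "2 ^ k * real (card (Lq (Suc n) k q))
      = (\<Sum>x\<in>{1..k}. \<Sum>S\<in>Pow {1..k}. character S (q(x := Suc (q x))) * (real k - 2 * real (card S)) ^ n)"
    by (simp only: card_Lq_Suc of_nat_sum sum_distrib_left Suc.IH)
  also have "\<dots> = (\<Sum>S\<in>Pow {1..k}. character S q * (real k - 2 * real (card S)) ^ n
                       * (\<Sum>x\<in>{1..k}. if x \<in> S then -1 else 1))"
    by (subst sum.swap) (auto simp: character_toggle finite_subset sum_distrib_left intro!: sum.cong)
  also have "\<dots> = (\<Sum>S\<in>Pow {1..k}. character S q * (real k - 2 * real (card S)) ^ Suc n)"
    by (intro sum.cong) (auto simp: sum_sign_indicator)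
  finally show ?case .
qed

lemma sum_Pow_card:
  assumes "finite A"
  shows "(\<Sum>S\<in>Pow A. g (card S)) = (\<Sum>j\<le>card A. of_nat (card A choose j) * g j)"
proof -
  have "(\<Sum>S\<in>Pow A. g (card S)) = (\<Sum>j\<le>card A. \<Sum>S\<in>{S \<in> Pow A. card S = j}. g (card S))"
    using assms by (intro sum.group[symmetric]) (auto intro: card_mono)
  also have "\<dots> = (\<Sum>j\<le>card A. of_nat (card A choose j) * g j)"
    using assms by (intro sum.cong) (auto simp: n_subsets[symmetric])
  finally show ?thesis .
qed

lemma one_minus_power_le_exp:
  fixes x :: real
  assumes "0 \<le> x" "x \<le> 1"
  shows "(1 - x) ^ n \<le> exp (- (x * real n))"
proof -
  have "(1 - x) ^ n \<le> exp (- x) ^ n"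
    using assms exp_ge_add_one_self[of "- x"] by (intro power_mono) auto
  then show ?thesis
    by (simp add: exp_of_nat_mult[symmetric] mult.commute)
qed

lemma power_diff_le_div_power:
  assumes "0 < k" "2 * m \<le> k" "real k * ln (real k) \<le> real n"
  shows "(real k - 2 * real m) ^ n \<le> real k ^ n / real k ^ (2 * m)"
proof -
  define x where "x = 2 * real m / real k"
  have x: "0 \<le> x" "x \<le> 1"
    using assms by (auto simp: x_def field_simps)
  have "(real k - 2 * real m) ^ n = real k ^ n * (1 - x) ^ n"
    using assms by (simp add: x_def field_simps flip: power_mult_distrib)
  also have "\<dots> \<le> real k ^ n * exp (- (x * real n))"
    using one_minus_power_le_exp[OF x] by (intro mult_left_mono) auto
  also have "\<dots> \<le> real k ^ n * exp (- (x * (real k * ln (real k))))"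
    using assms x by (intro mult_left_mono) (auto intro: mult_left_mono)
  also have "x * (real k * ln (real k)) = real (2 * m) * ln (real k)"
    using assms by (simp add: x_def)
  also have "exp (- (real (2 * m) * ln (real k))) = 1 / real k ^ (2 * m)"
    using assms exp_of_nat_mult[of "2 * m" "ln (real k)"] by (simp add: exp_minus divide_inverse)
  finally show ?thesis
    by simp
qed

lemma binomial_term_le:
  assumes "0 < k" "j \<le> k" "real k * ln (real k) \<le> real n"
  shows "real (k choose j) * \<bar>real k - 2 * real j\<bar> ^ n \<le> real k ^ n * ((1/2) ^ j + (1/2) ^ (k - j))"
proof -
  define m where "m = min j (k - j)"
  have m: "2 * m \<le> k"
    by (auto simp: m_def)
  have abs_eq: "\<bar>real k - 2 * real j\<bar> = real k - 2 * real m"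
    using assms by (auto simp: m_def min_def)
  have choose_eq: "k choose j = k choose m"
    using assms binomial_symmetric[of j k] by (auto simp: m_def min_def)
  have choose_le: "real (k choose m) \<le> real k ^ m"
    using binomial_le_pow[of m k] m by (simp flip: of_nat_power)
  have "(2::real) ^ m \<le> real k ^ m"
    using m by (cases "m = 0") (auto intro: power_mono)
  have "real (k choose j) * \<bar>real k - 2 * real j\<bar> ^ n \<le> real k ^ m * (real k ^ n / real k ^ (2 * m))"
    unfolding choose_eq abs_eq using choose_le power_diff_le_div_power[OF assms(1) m assms(3)] m
    by (intro mult_mono) auto
  also have "\<dots> = real k ^ n / real k ^ m"
    using assms by (simp add: mult_2 power_add)
  also have "\<dots> \<le> real k ^ n / 2 ^ m"
    using assms \<open>2 ^ m \<le> real k ^ m\<close> by (intro divide_left_mono) auto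
  also have "\<dots> \<le> real k ^ n * ((1/2) ^ j + (1/2) ^ (k - j))"
    by (auto simp: m_def min_def field_simps)
  finally show ?thesis .
qed

lemma card_Leven_ge:
  assumes "0 < k" "even n"
  shows "real k ^ n * 2 powr (1 - real k) \<le> real (card (Leven n k))"
proof -
  have "2 * real k ^ n = (\<Sum>S\<in>{{}, {1..k}}. (real k - 2 * real (card S)) ^ n)"
    using assms by simp
  also have "\<dots> \<le> (\<Sum>S\<in>Pow {1..k}. (real k - 2 * real (card S)) ^ n)"
    using assms by (intro sum_mono2) (auto simp: zero_le_even_power)
  also have "\<dots> = 2 ^ k * real (card (Leven n k))"
    by (simp add: Leven_def card_Lq_character_sum character_def)
  finally show ?thesis
    by (simp add: powr_diff powr_realpow field_simps)
qed

lemma card_Lq_le: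
  assumes "0 < k" "real k * ln (real k) \<le> real n"
  shows "real (card (Lq n k q)) \<le> real k ^ n * 2 powr (2 - real k)"
proof -
  have "2 ^ k * real (card (Lq n k q)) \<le> (\<Sum>S\<in>Pow {1..k}. \<bar>real k - 2 * real (card S)\<bar> ^ n)"
    unfolding card_Lq_character_sum
  proof (intro sum_mono)
    fix S
    have "character S q * (real k - 2 * real (card S)) ^ n
        \<le> \<bar>character S q * (real k - 2 * real (card S)) ^ n\<bar>"
      by (rule abs_ge_self)
    then show "character S q * (real k - 2 * real (card S)) ^ n \<le> \<bar>real k - 2 * real (card S)\<bar> ^ n"
      by (simp add: abs_mult abs_character power_abs)
  qed
  also have "\<dots> = (\<Sum>j\<le>k. real (k choose j) * \<bar>real k - 2 * real j\<bar> ^ n)"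
    using sum_Pow_card[of "{1..k}"] by simp
  also have "\<dots> \<le> (\<Sum>j\<le>k. real k ^ n * ((1/2) ^ j + (1/2) ^ (k - j)))"
    using assms by (intro sum_mono binomial_term_le) auto
  also have "\<dots> = real k ^ n * ((\<Sum>j\<le>k. (1/2) ^ j) + (\<Sum>j\<le>k. (1/2) ^ (k - j)))"
    by (simp only: sum_distrib_left[symmetric] sum.distrib)
  also have "(\<Sum>j\<le>k. (1/2::real) ^ (k - j)) = (\<Sum>j\<le>k. (1/2) ^ j)"
    using sum.atLeastAtMost_rev[of "\<lambda>j. (1/2::real) ^ j" 0 k] by (simp add: atLeast0AtMost)
  also have "real k ^ n * ((\<Sum>j\<le>k. (1/2) ^ j) + (\<Sum>j\<le>k. (1/2) ^ j)) = 2 * real k ^ n * (\<Sum>j\<le>k. (1/2::real) ^ j)"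
    by simp
  also have "\<dots> \<le> 2 * real k ^ n * 2"
    using geometric_sum_less[of "1/2::real" "{..k}"] by (intro mult_left_mono) auto
  finally show ?thesis
    by (simp add: powr_diff powr_realpow field_simps)
qed

theorem lemma7p4:
  fixes n k :: nat
  assumes "k \<ge> 2"
  shows "(even n \<longrightarrow> real (card (Leven n k)) \<ge> real k ^ n * 2 powr (1 - real k))
       \<and> (real n \<ge> real k * ln (real k) \<longrightarrow>
            (\<forall>q. (\<forall>j\<in>{1..k}. q j \<in> {0, 1}) \<longrightarrow>
               real (card (Lq n k q)) \<le> real k ^ n * 2 powr (2 - real k)))"
  using assms card_Leven_ge card_Lq_le by simp

end
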